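(* Let $H^T_{\mathbb{FC}}$ be the mapping on the running-time semantics of flowcharts defined in the context. Then $H^T_{\mathbb{FC}}$ is a verification functor: for all flowcharts $A,B$, $H^T_{\mathbb{FC}}([\![\mathsf{Seq}(A,B)]\!]) = H^T_{\mathbb{FC}}([\![B]\!])\circ H^T_{\mathbb{FC}}([\![A]\!])$, $H^T_{\mathbb{FC}}([\![\mathsf{Par}(A,B)]\!]) = H^T_{\mathbb{FC}}([\![A]\!])\times H^T_{\mathbb{FC}}([\![B]\!])$, and whenever $[\![A]\!]:\Sigma^{n}\uplus\Sigma^{k}\to\Sigma^{m}\uplus\Sigma^{k}$, for all $P:\Sigma^n\to\mathbb{N}^\infty$, $R:\Sigma^m\to\mathbb{N}^\infty$: $(P,R)\in H^T_{\mathbb{FC}}([\![\mathsf{Fb}(A)]\!])$ iff there is $Q:\Sigma^k\to\mathbb{N}^\infty$ with $((P,Q),(R,Q))\in H^T_{\mathbb{FC}}([\![A]\!])$.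
   Context: $\Sigma=\mathsf{Store}$ is the set of maps from program variables to $\mathbb{Z}$, and $\Sigma^n=\Sigma\uplus\dots\uplus\Sigma$ ($n$ summands). Flowcharts are built from basic flowcharts — identity, assignment $x:=t$, join $\Delta:\Sigma\uplus\Sigma\to\Sigma$, twist on $\Sigma\uplus\Sigma$, conditional fork $\mathrm{cond}_b:\Sigma\to\Sigma\uplus\Sigma$ (sending $\rho$ to the left summand if $\neg b_\rho$, to the right otherwise) — by sequential composition $\mathsf{Seq}$, parallel composition $\mathsf{Par}$ (disjoint union) and feedback $\mathsf{Fb}$ (the disjoint-union trace: iterate the flowchart, feeding outputs in the last summand back into the last input summand until an output lands in the first summands). The running time of a flowchart on a terminating input is the number of evaluations of non-neutral basic operations (every basic flowchart except identity and twist counts one step); the semantics $[\![A]\!]$ identifies two flowcharts iff they have the same input–output partial function and the same running time on all terminating inputs. $\mathbb{N}^\infty=\mathbb{N}\cup\{\infty\}$ with $n\le\infty$ and $n+\infty=\infty$. $H^T_{\mathbb{FC}}(\Sigma^n)$ is the set of functions $\Sigma^n\to\mathbb{N}^\infty$ (equivalently $n$-tuples of functions $\Sigma\to\mathbb{N}^\infty$, so $H^T_{\mathbb{FC}}(\Sigma^n\uplus\Sigma^m)=H^T_{\mathbb{FC}}(\Sigma^n)\times H^T_{\mathbb{FC}}(\Sigma^m)$), pre-ordered pointwise. For a flowchart $A$ with $[\![A]\!]:\Sigma^n\to\Sigma^m$ and $Q:\Sigma^m\to\mathbb{N}^\infty$, the relative running time $\mathsf{RRT}(A,Q):\Sigma^n\to\mathbb{N}^\infty$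 is $\infty$ at $\rho$ if $A$ does not terminate on $\rho$, and otherwise $\mathsf{RunTime}(A,\rho)+Q([\![A]\!](\rho))$. Define $(P,Q)\in H^T_{\mathbb{FC}}([\![A]\!])$ iff $P(\rho)\ge\mathsf{RRT}(A,Q)(\rho)$ for all $\rho$. Composition and product of relations are the usual relational ones. *)

theory Defs
  imports Main "HOL-Library.Extended_Nat"
begin

type_synonym vname = string
type_synonym store = "vname \<Rightarrow> int"

text \<open>An element of Sigma^n is a pair (i, rho) with i < n: the summand index and the store.\<close>
type_synonym state = "nat \<times> store"

text \<open>Flowcharts. Terms and boolean conditions are given by their meaning on stores.
  Fb k A traces the last k summands (A : Sigma^(n+k) -> Sigma^(m+k)).\<close>
datatype fc =
    Ident
  | Assign vname "store \<Rightarrow> int"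
  | Join
  | Twist
  | Cond "store \<Rightarrow> bool"
  | Seq fc fc
  | Par fc fc
  | Fb nat fc

fun nin :: "fc \<Rightarrow> nat" where
  "nin Ident = 1"
| "nin (Assign x t) = 1"
| "nin Join = 2"
| "nin Twist = 2"
| "nin (Cond b) = 1"
| "nin (Seq A B) = nin A"
| "nin (Par A B) = nin A + nin B"
| "nin (Fb k A) = nin A - k"

fun nout :: "fc \<Rightarrow> nat" where
  "nout Ident = 1"
| "nout (Assign x t) = 1"
| "nout Join = 1"
| "nout Twist = 2"
| "nout (Cond b) = 2"
| "nout (Seq A B) = nout B"
| "nout (Par A B) = nout A + nout B"
| "nout (Fb k A) = nout A - k"

fun wf :: "fc \<Rightarrow> bool" where
  "wf (Seq A B) = (wf A \<and> wf B \<and> nout A = nin B)"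
| "wf (Par A B) = (wf A \<and> wf B)"
| "wf (Fb k A) = (wf A \<and> k \<le> nin A \<and> k \<le> nout A)"
| "wf _ = True"

text \<open>exec A x y t: A run on input x terminates with output y after t non-neutral steps.
  fbiter k A y z t: the feedback loop of Fb k A, started at the output y of A, exits at z
  after t further steps.\<close>
inductive exec :: "fc \<Rightarrow> state \<Rightarrow> state \<Rightarrow> nat \<Rightarrow> bool"
  and fbiter :: "nat \<Rightarrow> fc \<Rightarrow> state \<Rightarrow> state \<Rightarrow> nat \<Rightarrow> bool" where
  ex_id: "exec Ident (0, \<rho>) (0, \<rho>) 0"
| ex_assign: "exec (Assign x t) (0, \<rho>) (0, \<rho>(x := t \<rho>)) 1"
| ex_join: "i < 2 \<Longrightarrow> exec Join (i, \<rho>) (0, \<rho>) 1"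
| ex_twist: "i < 2 \<Longrightarrow> exec Twist (i, \<rho>) (1 - i, \<rho>) 0"
| ex_cond: "exec (Cond b) (0, \<rho>) (if b \<rho> then 1 else 0, \<rho>) 1"
| ex_seq: "exec A x y t1 \<Longrightarrow> exec B y z t2 \<Longrightarrow> exec (Seq A B) x z (t1 + t2)"
| ex_parL: "i < nin A \<Longrightarrow> exec A (i, \<rho>) (j, \<rho>') t \<Longrightarrow> exec (Par A B) (i, \<rho>) (j, \<rho>') t"
| ex_parR: "nin A \<le> i \<Longrightarrow> exec B (i - nin A, \<rho>) (j, \<rho>') t
            \<Longrightarrow> exec (Par A B) (i, \<rho>) (j + nout A, \<rho>') t"
| ex_fb: "i < nin A - k \<Longrightarrow> exec A (i, \<rho>) y t1 \<Longrightarrow> fbiter k A y z t2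
            \<Longrightarrow> exec (Fb k A) (i, \<rho>) z (t1 + t2)"
| fb_exit: "j < nout A - k \<Longrightarrow> fbiter k A (j, \<rho>) (j, \<rho>) 0"
| fb_loop: "nout A - k \<le> j \<Longrightarrow> exec A (j - (nout A - k) + (nin A - k), \<rho>) y t1
            \<Longrightarrow> fbiter k A y z t2 \<Longrightarrow> fbiter k A (j, \<rho>) z (t1 + t2)"

type_synonym sem = "nat \<times> nat \<times> (state \<Rightarrow> state \<Rightarrow> nat \<Rightarrow> bool)"

definition sem :: "fc \<Rightarrow> sem" where
  "sem A = (nin A, nout A, exec A)"

text \<open>Elements of H(Sigma^n): n-tuples (lists of length n) of functions store -> N^infty.\<close>
type_synonym pred = "(store \<Rightarrow> enat) list"

text \<open>Relative running time (infinity if there is no terminating run).\<close>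
definition RRT :: "(state \<Rightarrow> state \<Rightarrow> nat \<Rightarrow> bool) \<Rightarrow> pred \<Rightarrow> state \<Rightarrow> enat" where
  "RRT S Q x = (INF yt \<in> {(y, t). S x y t}. enat (snd yt) + (Q ! fst (fst yt)) (snd (fst yt)))"

fun HT :: "sem \<Rightarrow> (pred \<times> pred) set" where
  "HT (n, m, S) = {(P, Q). length P = n \<and> length Q = m \<and>
       (\<forall>i < n. \<forall>\<rho>. RRT S Q (i, \<rho>) \<le> (P ! i) \<rho>)}"

end

theory Submission
  imports Defs
begin

text \<open>Relative running times compose: the RRT of a run that first performs S and then T is the
RRT of S measured against the table of RRTs of T. This yields the case Seq and the forward
direction for Fb, with Q the running time of the loop from the fed-back outputs.

An invariant Q of the loop does not bound its running
time from every fed-back output, since a wire may be fed back to itself at zero cost. But zero-cost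
runs are injective (they only route states along wires), so a loop entered from an external input
never closes a zero-cost cycle. Since Q decreases by the cost of each pass, an infinite loop would
eventually take only zero-cost passes, all with the same store, i.e. it would cycle through
finitely many states: a contradiction.\<close>

inductive_cases exec_IdentE: "exec Ident x y t"
inductive_cases exec_AssignE: "exec (Assign v f) x y t"
inductive_cases exec_JoinE: "exec Join x y t"
inductive_cases exec_TwistE: "exec Twist x y t"
inductive_cases exec_CondE: "exec (Cond b) x y t"
inductive_cases exec_SeqE: "exec (Seq A B) x y t"
inductive_cases exec_ParE: "exec (Par A B) x y t"
inductive_cases exec_FbE: "exec (Fb k A) x y t"
inductive_cases fbiterE: "fbiter k A u z t"

lemma exec_range: "exec A x y t \<Longrightarrow> fst x < nin A \<and> fst y < nout A"
proof -
  have "exec A x y t \<Longrightarrow> fst x < nin A \<and> fst y < nout A"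
   and "fbiter k B u z t' \<Longrightarrow> fst z < nout B - k" for k B u z t'
    by (induct rule: exec_fbiter.inducts) auto
  then show "exec A x y t \<Longrightarrow> ?thesis" by blast
qed

lemma zero_cost_preserves_store:
  shows "exec A x y t \<Longrightarrow> t = 0 \<Longrightarrow> snd y = snd x"
    and "fbiter k A u z t \<Longrightarrow> t = 0 \<Longrightarrow> snd z = snd u"
  by (induct rule: exec_fbiter.inducts) auto

lemma exec_Seq_iff:
  "exec (Seq A B) x z t \<longleftrightarrow> (\<exists>y t1 t2. exec A x y t1 \<and> exec B y z t2 \<and> t = t1 + t2)"
  by (blast elim: exec_SeqE intro: ex_seq)

lemma exec_Par_iff:
  "exec (Par A B) (i, \<rho>) (j, \<rho>') t \<longleftrightarrow>
     (i < nin A \<and> j < nout A \<and> exec A (i, \<rho>) (j, \<rho>') t) \<or>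
     (nin A \<le> i \<and> nout A \<le> j \<and> exec B (i - nin A, \<rho>) (j - nout A, \<rho>') t)"
proof
  assume "exec (Par A B) (i, \<rho>) (j, \<rho>') t"
  then show "(i < nin A \<and> j < nout A \<and> exec A (i, \<rho>) (j, \<rho>') t) \<or>
     (nin A \<le> i \<and> nout A \<le> j \<and> exec B (i - nin A, \<rho>) (j - nout A, \<rho>') t)"
    by (cases rule: exec_ParE[consumes 1]) (auto dest: exec_range)
next
  assume "(i < nin A \<and> j < nout A \<and> exec A (i, \<rho>) (j, \<rho>') t) \<or>
     (nin A \<le> i \<and> nout A \<le> j \<and> exec B (i - nin A, \<rho>) (j - nout A, \<rho>') t)"
  then show "exec (Par A B) (i, \<rho>) (j, \<rho>') t"
    using ex_parL[of i A \<rho> j \<rho>' t B] ex_parR[of A i B \<rho> "j - nout A" \<rho>' t] by auto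
qed

definition fb_reentry :: "nat \<Rightarrow> fc \<Rightarrow> state \<Rightarrow> state" where
  "fb_reentry k A u = (fst u - (nout A - k) + (nin A - k), snd u)"

definition fb_step :: "nat \<Rightarrow> fc \<Rightarrow> state \<Rightarrow> state \<Rightarrow> nat \<Rightarrow> bool" where
  "fb_step k A u y t \<longleftrightarrow> nout A - k \<le> fst u \<and> exec A (fb_reentry k A u) y t"

lemma fb_reentry_inj:
  "nout A - k \<le> fst u \<Longrightarrow> nout A - k \<le> fst v \<Longrightarrow> fb_reentry k A u = fb_reentry k A v \<Longrightarrow> u = v"
  unfolding fb_reentry_def by (cases u; cases v) auto

lemma fb_reentry_ge: "nin A - k \<le> fst (fb_reentry k A u)"
  unfolding fb_reentry_def by simp

lemma exec_Fb_iff: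
  "exec (Fb k A) x z t \<longleftrightarrow>
     fst x < nin A - k \<and> (\<exists>y t1 t2. exec A x y t1 \<and> fbiter k A y z t2 \<and> t = t1 + t2)"
proof
  assume "exec (Fb k A) x z t"
  then show "fst x < nin A - k \<and> (\<exists>y t1 t2. exec A x y t1 \<and> fbiter k A y z t2 \<and> t = t1 + t2)"
    by (cases rule: exec_FbE[consumes 1]) auto
next
  assume "fst x < nin A - k \<and> (\<exists>y t1 t2. exec A x y t1 \<and> fbiter k A y z t2 \<and> t = t1 + t2)"
  then show "exec (Fb k A) x z t"
    by (cases x) (auto intro: ex_fb)
qed

lemma fbiter_iff:
  "fbiter k A u z t \<longleftrightarrow>
     (fst u < nout A - k \<and> z = u \<and> t = 0) \<or>
     (\<exists>y t1 t2. fb_step k A u y t1 \<and> fbiter k A y z t2 \<and> t = t1 + t2)"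
proof
  assume "fbiter k A u z t"
  then show "(fst u < nout A - k \<and> z = u \<and> t = 0) \<or>
     (\<exists>y t1 t2. fb_step k A u y t1 \<and> fbiter k A y z t2 \<and> t = t1 + t2)"
  proof (cases rule: fbiterE[consumes 1])
    case (2 j \<rho> y t1 t2)
    then have "fb_step k A u y t1" by (simp add: fb_step_def fb_reentry_def)
    with 2 show ?thesis by blast
  qed simp
next
  assume "(fst u < nout A - k \<and> z = u \<and> t = 0) \<or>
     (\<exists>y t1 t2. fb_step k A u y t1 \<and> fbiter k A y z t2 \<and> t = t1 + t2)"
  then show "fbiter k A u z t"
    by (cases u) (auto simp: fb_step_def fb_reentry_def intro: fb_exit fb_loop)
qed

lemma fbiter_zero_cost_path:
  assumes "fbiter k A u z 0"
  shows "(\<lambda>u v. fb_step k A u v 0)\<^sup>*\<^sup>* u z"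
  using assms
proof (induction k A u z "0::nat" rule: exec_fbiter.inducts(2)[where ?P1.0 = "\<lambda>_ _ _ _. True"])
  case (fb_loop A k j \<rho> y t1 z t2)
  then show ?case
    by (auto simp: fb_step_def fb_reentry_def intro: converse_rtranclp_into_rtranclp)
qed simp_all

lemma fbiter_converge:
  assumes inj: "\<And>x x' y t. exec A x y t \<Longrightarrow> exec A x' y 0 \<Longrightarrow> x = x'"
    and run: "fbiter k A u z t" and zero_run: "fbiter k A u' z 0"
  shows "(\<lambda>u v. \<exists>t. fb_step k A u v t)\<^sup>*\<^sup>* u u' \<or> (\<lambda>u v. fb_step k A u v 0)\<^sup>*\<^sup>* u' u"
  using run zero_run inj
proof (induction k A u z t arbitrary: u' rule: exec_fbiter.inducts(2)[where ?P1.0 = "\<lambda>_ _ _ _. True"])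
  case (fb_exit j A k \<rho>)
  then show ?case using fbiter_zero_cost_path by blast
next
  case (fb_loop A k j \<rho> y t1 z t2)
  have step: "fb_step k A (j, \<rho>) y t1"
    using fb_loop.hyps(1,2) by (simp add: fb_step_def fb_reentry_def)
  from fb_loop.IH[OF fb_loop.prems]
  show ?case
  proof
    assume "(\<lambda>u v. \<exists>t. fb_step k A u v t)\<^sup>*\<^sup>* y u'"
    with step show ?thesis by (blast intro: converse_rtranclp_into_rtranclp)
  next
    assume "(\<lambda>u v. fb_step k A u v 0)\<^sup>*\<^sup>* u' y"
    then show ?thesis
    proof (cases rule: rtranclp.cases)
      case rtrancl_refl
      with step show ?thesis by blast
    next
      case (rtrancl_into_rtrancl v)
      then have "fb_reentry k A (j, \<rho>) = fb_reentry k A v"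
        using step fb_loop.prems(2) unfolding fb_step_def by blast
      then have "v = (j, \<rho>)"
        using fb_reentry_inj step rtrancl_into_rtrancl(2) unfolding fb_step_def by blast
      with rtrancl_into_rtrancl(1) show ?thesis by blast
    qed
  qed
qed simp_all

lemma exec_zero_cost_inj: "exec A x y t \<Longrightarrow> exec A x' y 0 \<Longrightarrow> x = x'"
proof (induction A arbitrary: x x' y t)
  case (Seq A B)
  then show ?case unfolding exec_Seq_iff by (metis add_is_0)
next
  case (Par A B)
  then show ?case
    by (cases x; cases x'; cases y) (fastforce simp: exec_Par_iff)
next
  case (Fb k A)
  from Fb.prems obtain w t1 t2 w' where
    x: "fst x < nin A - k" "exec A x w t1" "fbiter k A w y t2" and
    x': "fst x' < nin A - k" "exec A x' w' 0" "fbiter k A w' y 0"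
    unfolding exec_Fb_iff by auto
  have no_entry_from_loop: "fb_reentry k A v \<noteq> x''" if "fst x'' < nin A - k" for v x''
    using fb_reentry_ge[of A k v] that by auto
  from fbiter_converge[OF Fb.IH x(3) x'(3)] show ?case
  proof
    assume "(\<lambda>u v. \<exists>t. fb_step k A u v t)\<^sup>*\<^sup>* w w'"
    then show ?thesis
    proof (cases rule: rtranclp.cases)
      case (rtrancl_into_rtrancl v)
      then show ?thesis
        using Fb.IH x'(2) no_entry_from_loop[OF x'(1)] unfolding fb_step_def by blast
    qed (use Fb.IH x x' in blast)
  next
    assume "(\<lambda>u v. fb_step k A u v 0)\<^sup>*\<^sup>* w' w"
    then show ?thesis
    proof (cases rule: rtranclp.cases)
      case (rtrancl_into_rtrancl v)
      then show ?thesis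
        using Fb.IH x(2) no_entry_from_loop[OF x(1)] unfolding fb_step_def by metis
    qed (use Fb.IH x x' in blast)
  qed
qed (auto elim!: exec_IdentE exec_AssignE exec_JoinE exec_TwistE exec_CondE)

lemma RRT_le_run: "S x y t \<Longrightarrow> RRT S Q x \<le> enat t + (Q ! fst y) (snd y)"
  unfolding RRT_def by (rule INF_lower2[of "(y, t)"]) auto

lemma RRT_greatest:
  "(\<And>y t. S x y t \<Longrightarrow> v \<le> enat t + (Q ! fst y) (snd y)) \<Longrightarrow> v \<le> RRT S Q x"
  unfolding RRT_def by (rule INF_greatest) auto

lemma RRT_attained:
  assumes "RRT S Q x < \<infinity>"
  obtains y t where "S x y t" and "RRT S Q x = enat t + (Q ! fst y) (snd y)"
proof -
  let ?F = "(\<lambda>(y, t). enat t + (Q ! fst y) (snd y)) ` {(y, t). S x y t}"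
  have RRT_eq: "RRT S Q x = Inf ?F"
    unfolding RRT_def by (simp add: case_prod_beta')
  have "?F \<noteq> {}"
  proof
    assume "?F = {}"
    with RRT_eq have "RRT S Q x = \<infinity>" by (simp add: top_enat_def)
    with assms show False by simp
  qed
  then have "Inf ?F \<in> ?F"
    by (auto simp: Inf_enat_def intro: LeastI)
  with RRT_eq that show ?thesis by auto
qed

lemma RRT_comp_le:
  assumes comp: "\<And>y t1 z t2. S x y t1 \<Longrightarrow> T y z t2 \<Longrightarrow> S' x' z (t1 + t2)"
    and bound: "\<And>y t. S x y t \<Longrightarrow> RRT T R y \<le> (Q ! fst y) (snd y)"
  shows "RRT S' R x' \<le> RRT S Q x"
proof (rule RRT_greatest)
  fix y t1 assume run: "S x y t1"
  have "RRT S' R x' \<le> enat t1 + RRT T R y"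
  proof (cases "RRT T R y < \<infinity>")
    case True
    then obtain z t2 where "T y z t2" and "RRT T R y = enat t2 + (R ! fst z) (snd z)"
      by (rule RRT_attained)
    with RRT_le_run[of S' x' z "t1 + t2" R] comp[OF run] show ?thesis
      by (simp add: add.assoc flip: plus_enat_simps(1))
  qed simp
  also have "\<dots> \<le> enat t1 + (Q ! fst y) (snd y)"
    using bound[OF run] by (rule add_left_mono)
  finally show "RRT S' R x' \<le> enat t1 + (Q ! fst y) (snd y)" .
qed

lemma RRT_comp_ge:
  assumes decomp: "\<And>z t. S' x' z t \<Longrightarrow> \<exists>y t1 t2. S x y t1 \<and> T y z t2 \<and> t = t1 + t2"
    and bound: "\<And>y t. S x y t \<Longrightarrow> (Q ! fst y) (snd y) \<le> RRT T R y"
  shows "RRT S Q x \<le> RRT S' R x'"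
proof (rule RRT_greatest)
  fix z t assume "S' x' z t"
  then obtain y t1 t2 where run: "S x y t1" "T y z t2" and t: "t = t1 + t2"
    using decomp by blast
  have "RRT S Q x \<le> enat t1 + (Q ! fst y) (snd y)"
    using run(1) by (rule RRT_le_run)
  also have "\<dots> \<le> enat t1 + RRT T R y"
    using bound[OF run(1)] by (rule add_left_mono)
  also have "\<dots> \<le> enat t1 + (enat t2 + (R ! fst z) (snd z))"
    using RRT_le_run[of T y z t2 R] run(2) by (simp add: add_left_mono)
  finally show "RRT S Q x \<le> enat t + (R ! fst z) (snd z)"
    by (simp add: t add.assoc flip: plus_enat_simps(1))
qed

text \<open>RRT_table S R n is the weakest precondition of R: the least P with (P, R) valid for S.\<close>

definition RRT_table :: "(state \<Rightarrow> state \<Rightarrow> nat \<Rightarrow> bool) \<Rightarrow> pred \<Rightarrow> nat \<Rightarrow> pred" where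
  "RRT_table S R n = map (\<lambda>j \<rho>. RRT S R (j, \<rho>)) [0..<n]"

lemma length_RRT_table [simp]: "length (RRT_table S R n) = n"
  by (simp add: RRT_table_def)

lemma RRT_table_nth [simp]: "j < n \<Longrightarrow> (RRT_table S R n ! j) \<rho> = RRT S R (j, \<rho>)"
  by (simp add: RRT_table_def)

lemma HT_sem_iff:
  "(P, Q) \<in> HT (sem A) \<longleftrightarrow> length P = nin A \<and> length Q = nout A \<and>
     (\<forall>i < nin A. \<forall>\<rho>. RRT (exec A) Q (i, \<rho>) \<le> (P ! i) \<rho>)"
  by (simp add: sem_def)

lemma HT_Seq:
  assumes "nout A = nin B"
  shows "HT (sem (Seq A B)) = HT (sem A) O HT (sem B)"
proof
  show "HT (sem (Seq A B)) \<subseteq> HT (sem A) O HT (sem B)"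
  proof clarify
    fix P R assume PR: "(P, R) \<in> HT (sem (Seq A B))"
    let ?Q = "RRT_table (exec B) R (nin B)"
    have "RRT (exec A) ?Q (i, \<rho>) \<le> RRT (exec (Seq A B)) R (i, \<rho>)" for i \<rho>
      by (rule RRT_comp_ge[where T = "exec B"])
        (use assms in \<open>auto simp: exec_Seq_iff dest: exec_range\<close>)
    with PR have "(P, ?Q) \<in> HT (sem A)"
      by (auto simp: HT_sem_iff assms) (meson order_trans)
    moreover from PR have "(?Q, R) \<in> HT (sem B)"
      by (simp add: HT_sem_iff)
    ultimately show "(P, R) \<in> HT (sem A) O HT (sem B)" by blast
  qed
  show "HT (sem A) O HT (sem B) \<subseteq> HT (sem (Seq A B))"
  proof clarify
    fix P Q R assume PQ: "(P, Q) \<in> HT (sem A)" and QR: "(Q, R) \<in> HT (sem B)"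
    have "RRT (exec (Seq A B)) R (i, \<rho>) \<le> RRT (exec A) Q (i, \<rho>)" for i \<rho>
    proof (rule RRT_comp_le[where T = "exec B"])
      fix y t assume "exec A (i, \<rho>) y t"
      with QR assms show "RRT (exec B) R y \<le> (Q ! fst y) (snd y)"
        by (cases y) (auto simp: HT_sem_iff dest: exec_range)
    qed (auto simp: exec_Seq_iff)
    with PQ QR show "(P, R) \<in> HT (sem (Seq A B))"
      by (auto simp: HT_sem_iff) (meson order_trans)
  qed
qed

lemma RRT_Par_left:
  assumes "i < nin A" "length R1 = nout A"
  shows "RRT (exec (Par A B)) (R1 @ R2) (i, \<rho>) = RRT (exec A) R1 (i, \<rho>)"
proof (rule antisym; rule RRT_greatest)
  fix y t assume "exec A (i, \<rho>) y t"
  with assms show "RRT (exec (Par A B)) (R1 @ R2) (i, \<rho>) \<le> enat t + (R1 ! fst y) (snd y)"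
    using RRT_le_run[of "exec (Par A B)" "(i, \<rho>)" y t "R1 @ R2"]
    by (cases y) (auto simp: exec_Par_iff nth_append dest: exec_range)
next
  fix y t assume "exec (Par A B) (i, \<rho>) y t"
  with assms show "RRT (exec A) R1 (i, \<rho>) \<le> enat t + ((R1 @ R2) ! fst y) (snd y)"
    using RRT_le_run[of "exec A" "(i, \<rho>)" y t R1]
    by (cases y) (auto simp: exec_Par_iff nth_append)
qed

lemma RRT_Par_right:
  assumes "nin A \<le> i" "length R1 = nout A"
  shows "RRT (exec (Par A B)) (R1 @ R2) (i, \<rho>) = RRT (exec B) R2 (i - nin A, \<rho>)"
proof (rule antisym; rule RRT_greatest)
  fix y t assume "exec B (i - nin A, \<rho>) y t"
  with assms show "RRT (exec (Par A B)) (R1 @ R2) (i, \<rho>) \<le> enat t + (R2 ! fst y) (snd y)"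
    using RRT_le_run[of "exec (Par A B)" "(i, \<rho>)" "(fst y + nout A, snd y)" t "R1 @ R2"]
    by (cases y) (auto simp: exec_Par_iff nth_append)
next
  fix y t assume "exec (Par A B) (i, \<rho>) y t"
  with assms show "RRT (exec B) R2 (i - nin A, \<rho>) \<le> enat t + ((R1 @ R2) ! fst y) (snd y)"
    using RRT_le_run[of "exec B" "(i - nin A, \<rho>)" "(fst y - nout A, snd y)" t R2]
    by (cases y) (auto simp: exec_Par_iff nth_append)
qed

lemma all_less_add_iff: "(\<forall>i < a + (b::nat). P i) \<longleftrightarrow> (\<forall>i < a. P i) \<and> (\<forall>i < b. P (a + i))"
proof
  assume H: "(\<forall>i < a. P i) \<and> (\<forall>i < b. P (a + i))"
  show "\<forall>i < a + b. P i"
  proof (intro allI impI)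
    fix i assume "i < a + b"
    with H show "P i" by (cases "i < a") (auto dest: spec[of _ "i - a"])
  qed
qed simp

lemma HT_Par_append:
  assumes "length P1 = nin A" "length R1 = nout A"
  shows "(P1 @ P2, R1 @ R2) \<in> HT (sem (Par A B)) \<longleftrightarrow>
    (P1, R1) \<in> HT (sem A) \<and> (P2, R2) \<in> HT (sem B)"
proof -
  have "(\<forall>i < nin A + nin B. \<forall>\<rho>. RRT (exec (Par A B)) (R1 @ R2) (i, \<rho>) \<le> ((P1 @ P2) ! i) \<rho>)
    \<longleftrightarrow> (\<forall>i < nin A. \<forall>\<rho>. RRT (exec A) R1 (i, \<rho>) \<le> (P1 ! i) \<rho>) \<and>
        (\<forall>i < nin B. \<forall>\<rho>. RRT (exec B) R2 (i, \<rho>) \<le> (P2 ! i) \<rho>)"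
    unfolding all_less_add_iff using assms
    by (simp add: RRT_Par_left RRT_Par_right nth_append)
  with assms show ?thesis
    by (auto simp: HT_sem_iff)
qed

lemma HT_Par:
  "HT (sem (Par A B)) =
     {(P1 @ P2, R1 @ R2) | P1 R1 P2 R2. (P1, R1) \<in> HT (sem A) \<and> (P2, R2) \<in> HT (sem B)}"
proof
  show "HT (sem (Par A B)) \<subseteq>
      {(P1 @ P2, R1 @ R2) | P1 R1 P2 R2. (P1, R1) \<in> HT (sem A) \<and> (P2, R2) \<in> HT (sem B)}"
  proof clarify
    fix P R assume PR: "(P, R) \<in> HT (sem (Par A B))"
    then have lengths: "length (take (nin A) P) = nin A" "length (take (nout A) R) = nout A"
      by (auto simp: HT_sem_iff)
    from PR have "(take (nin A) P @ drop (nin A) P, take (nout A) R @ drop (nout A) R)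
        \<in> HT (sem (Par A B))"
      by simp
    then show "\<exists>P1 R1 P2 R2. (P, R) = (P1 @ P2, R1 @ R2) \<and>
        (P1, R1) \<in> HT (sem A) \<and> (P2, R2) \<in> HT (sem B)"
      unfolding HT_Par_append[OF lengths] by (metis append_take_drop_id)
  qed
next
  show "{(P1 @ P2, R1 @ R2) | P1 R1 P2 R2. (P1, R1) \<in> HT (sem A) \<and> (P2, R2) \<in> HT (sem B)}
      \<subseteq> HT (sem (Par A B))"
  proof clarify
    fix P1 R1 P2 R2 assume "(P1, R1) \<in> HT (sem A)" "(P2, R2) \<in> HT (sem B)"
    moreover from this have "length P1 = nin A" "length R1 = nout A"
      by (simp_all add: HT_sem_iff)
    ultimately show "(P1 @ P2, R1 @ R2) \<in> HT (sem (Par A B))"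
      by (simp add: HT_Par_append)
  qed
qed

lemma RRT_fbiter_exit:
  assumes "fst u < nout A - k"
  shows "RRT (fbiter k A) R u = (R ! fst u) (snd u)"
proof (rule antisym)
  show "RRT (fbiter k A) R u \<le> (R ! fst u) (snd u)"
    using RRT_le_run[of "fbiter k A" u u 0 R] assms fbiter_iff[of k A u u 0]
    by (simp add: zero_enat_def [symmetric])
  show "(R ! fst u) (snd u) \<le> RRT (fbiter k A) R u"
  proof (rule RRT_greatest)
    fix z t assume "fbiter k A u z t"
    with assms have "z = u \<and> t = 0"
      by (simp only: fbiter_iff[of k A u]) (auto simp: fb_step_def)
    then show "(R ! fst u) (snd u) \<le> enat t + (R ! fst z) (snd z)" by simp
  qed
qed

lemma fbiter_step:
  assumes "fb_step k A u y t1" "fbiter k A y z t2"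
  shows "fbiter k A u z (t1 + t2)"
  using assms by (simp only: fbiter_iff[of k A u]) blast

lemma RRT_fbiter_loop:
  assumes "nout A - k \<le> fst u"
  shows "RRT (fbiter k A) R u =
    RRT (exec A) (RRT_table (fbiter k A) R (nout A)) (fb_reentry k A u)"
proof (rule antisym)
  show "RRT (fbiter k A) R u \<le> RRT (exec A) (RRT_table (fbiter k A) R (nout A)) (fb_reentry k A u)"
  proof (rule RRT_comp_le[where T = "fbiter k A"])
    show "fbiter k A u z (t1 + t2)" if "exec A (fb_reentry k A u) y t1" "fbiter k A y z t2" for y t1 z t2
      using that assms by (intro fbiter_step) (simp_all add: fb_step_def)
  qed (drule exec_range, simp)
  show "RRT (exec A) (RRT_table (fbiter k A) R (nout A)) (fb_reentry k A u) \<le> RRT (fbiter k A) R u"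
  proof (rule RRT_comp_ge[where T = "fbiter k A"])
    show "\<exists>y t1 t2. exec A (fb_reentry k A u) y t1 \<and> fbiter k A y z t2 \<and> t = t1 + t2"
      if "fbiter k A u z t" for z t
      using that assms by (simp only: fbiter_iff[of k A u]) (auto simp: fb_step_def)
  qed (drule exec_range, simp)
qed

lemma RRT_fbiter_step:
  assumes "fb_step k A u y t"
  shows "RRT (fbiter k A) R u \<le> enat t + RRT (fbiter k A) R y"
proof -
  have run: "exec A (fb_reentry k A u) y t" and loop: "nout A - k \<le> fst u"
    using assms by (simp_all add: fb_step_def)
  have "RRT (fbiter k A) R u \<le> enat t + (RRT_table (fbiter k A) R (nout A) ! fst y) (snd y)"
    unfolding RRT_fbiter_loop[OF loop] using run by (rule RRT_le_run)
  with exec_range[OF run] show ?thesis by simp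
qed

lemma RRT_Fb:
  assumes "fst x < nin A - k"
  shows "RRT (exec (Fb k A)) R x = RRT (exec A) (RRT_table (fbiter k A) R (nout A)) x"
proof (rule antisym)
  show "RRT (exec (Fb k A)) R x \<le> RRT (exec A) (RRT_table (fbiter k A) R (nout A)) x"
    by (rule RRT_comp_le[where T = "fbiter k A"])
      (use assms in \<open>auto simp: exec_Fb_iff\<close>, drule exec_range, simp)
  show "RRT (exec A) (RRT_table (fbiter k A) R (nout A)) x \<le> RRT (exec (Fb k A)) R x"
    by (rule RRT_comp_ge[where T = "fbiter k A"])
      (use assms in \<open>auto simp: exec_Fb_iff\<close>, drule exec_range, simp)
qed

lemma antimono_nat_eventually_const:
  fixes f :: "nat \<Rightarrow> nat"
  assumes "\<And>s. f (Suc s) \<le> f s"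
  obtains S where "\<And>s. S \<le> s \<Longrightarrow> f s = f S"
proof -
  obtain S where min: "\<And>s. f S \<le> f s"
    using ex_has_least_nat[of "\<lambda>_. True" 0 f] by blast
  show ?thesis
    by (rule that[of S]) (meson antisym lift_Suc_antimono_le[of f, OF assms] min)
qed

text \<open>A loop path entered from an external input never returns to an earlier state by a zero-cost
pass: the first repetition would be a state with two predecessors, one of them reached at zero
cost, contradicting zero-cost injectivity.\<close>

lemma fb_path_inj:
  assumes entry: "exec A x (p 0) t" "fst x < nin A - k"
    and path: "\<And>s. \<exists>c. fb_step k A (p s) (p (Suc s)) c"
    and returns: "\<And>a b. a < b \<Longrightarrow> p a = p b \<Longrightarrow> fb_step k A (p (b - 1)) (p b) 0"
  shows "inj p"
proof -
  have "p a \<noteq> p b" if "a < b" for a b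
    using that
  proof (induction a arbitrary: b)
    case 0
    show ?case
    proof
      assume "p 0 = p b"
      with returns[OF 0] have "exec A (fb_reentry k A (p (b - 1))) (p 0) 0"
        by (simp add: fb_step_def)
      with entry(1) have "x = fb_reentry k A (p (b - 1))"
        by (rule exec_zero_cost_inj)
      with entry(2) fb_reentry_ge[of A k] show False by (metis not_le)
    qed
  next
    case (Suc a)
    show ?case
    proof
      assume ret: "p (Suc a) = p b"
      obtain c where "fb_step k A (p a) (p (Suc a)) c" using path by blast
      moreover have "fb_step k A (p (b - 1)) (p (Suc a)) 0"
        using returns[OF Suc.prems ret] ret by simp
      ultimately have "p a = p (b - 1)"
        unfolding fb_step_def by (metis exec_zero_cost_inj fb_reentry_inj)
      moreover have "a < b - 1" using Suc.prems by simp
      ultimately show False using Suc.IH by blast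
    qed
  qed
  then show ?thesis
    by (metis inj_onI linorder_neq_iff)
qed

lemma fb_zero_cost_path_store:
  assumes zero: "\<And>s. S \<le> s \<Longrightarrow> fb_step k A (p s) (p (Suc s)) 0" and "S \<le> s"
  shows "snd (p s) = snd (p S)"
  using \<open>S \<le> s\<close>
proof (induction s rule: dec_induct)
  case (step s)
  then have "exec A (fb_reentry k A (p s)) (p (Suc s)) 0"
    using zero[of s] by (simp add: fb_step_def)
  then have "snd (p (Suc s)) = snd (fb_reentry k A (p s))"
    by (rule zero_cost_preserves_store(1)) simp
  with step.IH show ?case
    by (simp add: fb_reentry_def)
qed simp

lemma fb_no_infinite_descent:
  fixes W :: "state \<Rightarrow> nat"
  assumes entry: "exec A x (p 0) t" "fst x < nin A - k"
    and descent: "\<And>s. \<exists>c. fb_step k A (p s) (p (Suc s)) c \<and> c + W (p (Suc s)) \<le> W (p s)"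
  shows False
proof -
  have antimono: "W (p (Suc s)) \<le> W (p s)" for s
    using descent[of s] by auto
  obtain S where const: "\<And>s. S \<le> s \<Longrightarrow> W (p s) = W (p S)"
    using antimono_nat_eventually_const[of "W \<circ> p"] antimono by auto
  have free_return: "fb_step k A (p (b - 1)) (p b) 0" if "a < b" "p a = p b" for a b
  proof -
    have b: "Suc (b - 1) = b" using that by simp
    obtain c where step: "fb_step k A (p (b - 1)) (p b) c" and le: "c + W (p b) \<le> W (p (b - 1))"
      using descent[of "b - 1"] unfolding b by blast
    have "W (p (b - 1)) \<le> W (p a)"
      using lift_Suc_antimono_le[of "W \<circ> p" a "b - 1"] antimono that(1) by simp
    with le that(2) have "c = 0" by simp
    with step show ?thesis by simp
  qed
  have "inj p"
  proof (rule fb_path_inj[where p = p, OF entry])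
    show "\<exists>c. fb_step k A (p s) (p (Suc s)) c" for s
      using descent by blast
  qed (rule free_return)
  have range: "fst (p s) < nout A" for s
  proof (cases s)
    case (Suc s')
    with descent[of s'] show ?thesis
      unfolding fb_step_def using exec_range by blast
  qed (use exec_range[OF entry(1)] in simp)
  have zero: "fb_step k A (p s) (p (Suc s)) 0" if "S \<le> s" for s
    using descent[of s] const[of s] const[of "Suc s"] that by auto
  have "p ` {S..} \<subseteq> {..<nout A} \<times> {snd (p S)}"
  proof (rule image_subsetI)
    fix s assume "s \<in> {S..}"
    then have "snd (p s) = snd (p S)"
      using fb_zero_cost_path_store[of S k A p s] zero by simp
    with range[of s] show "p s \<in> {..<nout A} \<times> {snd (p S)}"
      by (cases "p s") simp
  qed
  then have "finite (p ` {S..})"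
    by (rule finite_subset) simp
  moreover have "inj_on p {S..}"
    using \<open>inj p\<close> by (rule inj_on_subset) simp
  ultimately have "finite {S..}"
    by (rule finite_imageD)
  then show False
    using infinite_Ici by blast
qed

lemma fbiter_overrun_step:
  assumes lengths: "length R = nout A - k" "length Q = k"
    and inv: "\<And>v. nout A - k \<le> fst v \<Longrightarrow> fst v < nout A \<Longrightarrow>
        RRT (exec A) (R @ Q) (fb_reentry k A v) \<le> ((R @ Q) ! fst v) (snd v)"
    and v: "fst v < nout A" and overrun: "((R @ Q) ! fst v) (snd v) < RRT (fbiter k A) R v"
  obtains v' c where "fb_step k A v v' c"
    and "enat c + ((R @ Q) ! fst v') (snd v') \<le> ((R @ Q) ! fst v) (snd v)"
    and "fst v' < nout A" and "((R @ Q) ! fst v') (snd v') < RRT (fbiter k A) R v'"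
proof -
  have loop: "nout A - k \<le> fst v"
  proof (rule ccontr)
    assume "\<not> nout A - k \<le> fst v"
    with lengths overrun show False
      by (simp add: RRT_fbiter_exit nth_append)
  qed
  have bound: "RRT (exec A) (R @ Q) (fb_reentry k A v) \<le> ((R @ Q) ! fst v) (snd v)"
    using inv[OF loop v] .
  also have "\<dots> < \<infinity>"
    using overrun by (meson enat_ord_simps(3) less_le_trans)
  finally obtain v' c where run: "exec A (fb_reentry k A v) v' c"
    and eq: "RRT (exec A) (R @ Q) (fb_reentry k A v) = enat c + ((R @ Q) ! fst v') (snd v')"
    by (rule RRT_attained)
  have step: "fb_step k A v v' c"
    using loop run by (simp add: fb_step_def)
  have descent: "enat c + ((R @ Q) ! fst v') (snd v') \<le> ((R @ Q) ! fst v) (snd v)"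
    using bound eq by simp
  have "((R @ Q) ! fst v') (snd v') < RRT (fbiter k A) R v'"
  proof (rule ccontr)
    assume "\<not> ?thesis"
    then have "RRT (fbiter k A) R v \<le> ((R @ Q) ! fst v) (snd v)"
      using RRT_fbiter_step[OF step, of R] descent
      by (meson add_left_mono not_less order_trans)
    with overrun show False by simp
  qed
  with that step descent exec_range[OF run] show ?thesis by blast
qed

text \<open>Where the loop would overrun the bound promised by Q, it overruns again after one more pass,
at the price of the cost of that pass; iterating gives an infinite descent.\<close>

lemma RRT_fbiter_bounded:
  assumes lengths: "length R = nout A - k" "length Q = k"
    and inv: "\<And>v. nout A - k \<le> fst v \<Longrightarrow> fst v < nout A \<Longrightarrow>
        RRT (exec A) (R @ Q) (fb_reentry k A v) \<le> ((R @ Q) ! fst v) (snd v)"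
    and entry: "exec A x y t" "fst x < nin A - k"
  shows "RRT (fbiter k A) R y \<le> ((R @ Q) ! fst y) (snd y)"
proof (rule ccontr)
  define W where "W v = ((R @ Q) ! fst v) (snd v)" for v
  define overrun where "overrun v \<longleftrightarrow> fst v < nout A \<and> W v < RRT (fbiter k A) R v" for v
  assume "\<not> ?thesis"
  with exec_range[OF entry(1)] have "overrun y"
    by (simp add: overrun_def W_def)
  have "\<exists>p. \<forall>s. (overrun (p s) \<and> (s = 0 \<longrightarrow> p s = y)) \<and>
      (\<exists>c. fb_step k A (p s) (p (Suc s)) c \<and> enat c + W (p (Suc s)) \<le> W (p s))"
  proof (rule dependent_nat_choice)
    fix v :: state and s :: nat assume "overrun v \<and> (s = 0 \<longrightarrow> v = y)"
    then obtain v' c where "fb_step k A v v' c" "enat c + W v' \<le> W v" "overrun v'"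
      using fbiter_overrun_step[OF lengths inv] unfolding overrun_def W_def by blast
    then show "\<exists>v'. (overrun v' \<and> (Suc s = 0 \<longrightarrow> v' = y)) \<and>
        (\<exists>c. fb_step k A v v' c \<and> enat c + W v' \<le> W v)"
      by blast
  qed (use \<open>overrun y\<close> in blast)
  then obtain p where p0: "p 0 = y"
    and path: "\<And>s. overrun (p s) \<and> (\<exists>c. fb_step k A (p s) (p (Suc s)) c \<and>
        enat c + W (p (Suc s)) \<le> W (p s))"
    by blast
  have finite: "W v = enat (the_enat (W v))" if "overrun v" for v
  proof -
    from that have "W v < \<infinity>"
      unfolding overrun_def by (meson enat_ord_simps(3) less_le_trans)
    then show ?thesis by auto
  qed
  show False
  proof (rule fb_no_infinite_descent[where W = "\<lambda>v. the_enat (W v)"])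
    show "exec A x (p 0) t" "fst x < nin A - k" using entry p0 by simp_all
    show "\<exists>c. fb_step k A (p s) (p (Suc s)) c \<and> c + the_enat (W (p (Suc s))) \<le> the_enat (W (p s))"
      for s
      using path[of s] path[of "Suc s"] finite[of "p s"] finite[of "p (Suc s)"]
      by (metis enat_ord_simps(1) plus_enat_simps(1))
  qed
qed

lemma take_RRT_table_fbiter:
  assumes "length R = nout A - k"
  shows "take (nout A - k) (RRT_table (fbiter k A) R (nout A)) = R"
proof (rule nth_equalityI)
  show "length (take (nout A - k) (RRT_table (fbiter k A) R (nout A))) = length R"
    using assms by simp
  show "take (nout A - k) (RRT_table (fbiter k A) R (nout A)) ! j = R ! j"
    if "j < length (take (nout A - k) (RRT_table (fbiter k A) R (nout A)))" for j
    using that by (intro ext) (simp add: RRT_fbiter_exit)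
qed

lemma HT_Fb_loop_invariant:
  assumes dims: "nin A = n + k" "nout A = m + k"
    and lengths: "length P = n" "length R = m"
    and PR: "(P, R) \<in> HT (sem (Fb k A))"
  shows "(P @ drop m (RRT_table (fbiter k A) R (nout A)), RRT_table (fbiter k A) R (nout A))
    \<in> HT (sem A)"
proof -
  let ?L = "RRT_table (fbiter k A) R (nout A)"
  let ?Q = "drop m ?L"
  have "RRT (exec A) ?L (i, \<rho>) \<le> ((P @ ?Q) ! i) \<rho>" if "i < n + k" for i \<rho>
  proof (cases "i < n")
    case True
    then have "RRT (exec A) ?L (i, \<rho>) = RRT (exec (Fb k A)) R (i, \<rho>)"
      using RRT_Fb[of "(i, \<rho>)" A k R] dims by simp
    also have "\<dots> \<le> (P ! i) \<rho>"
      using PR True dims by (simp add: HT_sem_iff)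
    finally show ?thesis
      using True lengths by (simp add: nth_append)
  next
    case False
    let ?v = "(m + (i - n), \<rho>)"
    have "fb_reentry k A ?v = (i, \<rho>)"
      using False dims by (simp add: fb_reentry_def)
    then have "RRT (exec A) ?L (i, \<rho>) = RRT (fbiter k A) R ?v"
      using RRT_fbiter_loop[of A k ?v R] dims by simp
    also have "\<dots> = ((P @ ?Q) ! i) \<rho>"
      using False that dims lengths by (simp add: nth_append)
    finally show ?thesis by simp
  qed
  with dims lengths show ?thesis
    by (simp add: HT_sem_iff)
qed

lemma HT_Fb_of_loop_invariant:
  assumes dims: "nin A = n + k" "nout A = m + k"
    and lengths: "length P = n" "length R = m" "length Q = k"
    and PQ: "(P @ Q, R @ Q) \<in> HT (sem A)"
  shows "(P, R) \<in> HT (sem (Fb k A))"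
proof -
  have valid: "RRT (exec A) (R @ Q) (i, \<rho>) \<le> ((P @ Q) ! i) \<rho>" if "i < n + k" for i \<rho>
    using PQ dims that by (simp add: HT_sem_iff)
  have inv: "RRT (exec A) (R @ Q) (fb_reentry k A v) \<le> ((R @ Q) ! fst v) (snd v)"
    if "nout A - k \<le> fst v" "fst v < nout A" for v
  proof -
    have i: "fst v - m + n < n + k" "\<not> fst v - m + n < n"
      using that dims by auto
    have "fb_reentry k A v = (fst v - m + n, snd v)"
      using dims by (simp add: fb_reentry_def)
    with valid[OF i(1)] i that dims lengths show ?thesis
      by (simp add: nth_append)
  qed
  have "RRT (exec (Fb k A)) R (i, \<rho>) \<le> (P ! i) \<rho>" if "i < n" for i \<rho>
  proof -
    have "RRT (exec (Fb k A)) R (i, \<rho>) \<le> RRT (exec A) (R @ Q) (i, \<rho>)"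
    proof (rule RRT_comp_le[where T = "fbiter k A"])
      show "exec (Fb k A) (i, \<rho>) z (t1 + t2)"
        if "exec A (i, \<rho>) y t1" "fbiter k A y z t2" for y t1 z t2
        using that \<open>i < n\<close> dims by (intro ex_fb) simp_all
      show "RRT (fbiter k A) R y \<le> ((R @ Q) ! fst y) (snd y)"
        if "exec A (i, \<rho>) y t" for y t
        by (rule RRT_fbiter_bounded[OF _ lengths(3) inv that])
          (use dims lengths \<open>i < n\<close> in simp_all)
    qed
    also have "\<dots> \<le> (P ! i) \<rho>"
      using valid[of i \<rho>] that lengths by (simp add: nth_append)
    finally show ?thesis .
  qed
  with dims lengths show ?thesis
    by (simp add: HT_sem_iff)
qed

lemma HT_Fb:
  assumes dims: "nin A = n + k" "nout A = m + k"
    and lengths: "length P = n" "length R = m"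
  shows "(P, R) \<in> HT (sem (Fb k A)) \<longleftrightarrow> (\<exists>Q. length Q = k \<and> (P @ Q, R @ Q) \<in> HT (sem A))"
proof
  let ?L = "RRT_table (fbiter k A) R (nout A)"
  assume "(P, R) \<in> HT (sem (Fb k A))"
  moreover have "R @ drop m ?L = ?L"
    using take_RRT_table_fbiter[of R A k] dims lengths by (metis append_take_drop_id diff_add_inverse2)
  ultimately show "\<exists>Q. length Q = k \<and> (P @ Q, R @ Q) \<in> HT (sem A)"
    using HT_Fb_loop_invariant[OF dims lengths] dims by (intro exI[of _ "drop m ?L"]) simp
qed (use HT_Fb_of_loop_invariant[OF dims lengths] in blast)

theorem theorem4p3:
  shows "(\<forall>A B. wf A \<and> wf B \<and> nout A = nin B \<longrightarrow>
            HT (sem (Seq A B)) = HT (sem A) O HT (sem B))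
       \<and> (\<forall>A B. wf A \<and> wf B \<longrightarrow>
            HT (sem (Par A B)) =
              {(P1 @ P2, R1 @ R2) | P1 R1 P2 R2. (P1, R1) \<in> HT (sem A) \<and> (P2, R2) \<in> HT (sem B)})
       \<and> (\<forall>A n m k. wf A \<and> nin A = n + k \<and> nout A = m + k \<longrightarrow>
            (\<forall>P R. length P = n \<longrightarrow> length R = m \<longrightarrow>
               ((P, R) \<in> HT (sem (Fb k A)) \<longleftrightarrow>
                (\<exists>Q. length Q = k \<and> (P @ Q, R @ Q) \<in> HT (sem A)))))"
proof (intro conjI allI impI)
  fix A B assume "wf A \<and> wf B \<and> nout A = nin B"
  then show "HT (sem (Seq A B)) = HT (sem A) O HT (sem B)"
    by (simp add: HT_Seq)
next
  fix A B show "HT (sem (Par A B)) =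
      {(P1 @ P2, R1 @ R2) | P1 R1 P2 R2. (P1, R1) \<in> HT (sem A) \<and> (P2, R2) \<in> HT (sem B)}"
    by (rule HT_Par)
next
  fix A :: fc and n m k :: nat and P R :: pred
  assume "wf A \<and> nin A = n + k \<and> nout A = m + k" "length P = n" "length R = m"
  then show "(P, R) \<in> HT (sem (Fb k A)) \<longleftrightarrow> (\<exists>Q. length Q = k \<and> (P @ Q, R @ Q) \<in> HT (sem A))"
    using HT_Fb[of A n k m P R] by simp
qed

end
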